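(* Let $m,n$ be positive integers, $r$ an integer with $1\leq r\leq\min\{m,n\}$ if $m\neq n$ and $1\le r\le n-1$ if $m=n$, and $a\in\{0,\dots,r\}$. Let $Q(\lambda)$ be an $m\times n$ complex matrix pencil with normal rank at most $r$. If $Q\in\overline{{\cal O}({\cal K}_a^{m\times n})}$, then $Q(\lambda)^T\in\overline{{\cal O}({\cal K}_{r-a}^{n\times m})}$.
   Context: A matrix pencil is $A+\lambda B$ with complex matrices; normal rank is rank over $\mathbb{C}(\lambda)$. ${\cal O}(Q)$ denotes the orbit of $Q$ under strict equivalence ($Q\mapsto EQF$, $E,F$ constant invertible) and the bar denotes closure in the space of pencils of the given size. $L_k$ is the $k\times(k+1)$ pencil with $\lambda$ at $(i,i)$ and $1$ at $(i,i+1)$. For sizes $p\times q$ and $b\in\{0,\dots,r\}$, ${\cal K}_b^{p\times q}$ is defined by the Euclidean divisions $b=\alpha(q-r)+s$ ($0\le s<q-r$), $r-b=\beta(p-r)+t$ ($0\le t<p-r$), as the $p\times q$ block-diagonal pencil with $s$ blocks $L_{\alpha+1}$, $q-r-s$ blocks $L_\alpha$, $t$ blocks $L_{\beta+1}^T$ and $p-r-t$ blocks $L_\beta^T$. *)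

theory Defs
  imports "Jordan_Normal_Form.Matrix" "Jordan_Normal_Form.DL_Rank"
          "HOL-Computational_Algebra.Fraction_Field"
begin

text \<open>A matrix pencil A + \<lambda> B is represented by the pair (A, B) of complex matrices.\<close>
type_synonym pencil = "complex mat \<times> complex mat"

definition is_pencil :: "nat \<Rightarrow> nat \<Rightarrow> pencil \<Rightarrow> bool" where
  "is_pencil p q P \<longleftrightarrow> fst P \<in> carrier_mat p q \<and> snd P \<in> carrier_mat p q"

definition pencil_ratmat :: "pencil \<Rightarrow> complex poly fract mat" where
  "pencil_ratmat P = mat (dim_row (fst P)) (dim_col (fst P))
      (\<lambda>(i,j). Fract [: fst P $$ (i,j), snd P $$ (i,j) :] 1)"

definition normal_rank :: "pencil \<Rightarrow> nat" where
  "normal_rank P = vec_space.rank (dim_row (fst P)) (pencil_ratmat P)"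

definition pencil_transpose :: "pencil \<Rightarrow> pencil" where
  "pencil_transpose P = (transpose_mat (fst P), transpose_mat (snd P))"

definition orbit :: "pencil \<Rightarrow> pencil set" where
  "orbit P = {(E * fst P * F, E * snd P * F) | E F.
      E \<in> carrier_mat (dim_row (fst P)) (dim_row (fst P)) \<and>
      F \<in> carrier_mat (dim_col (fst P)) (dim_col (fst P)) \<and>
      invertible_mat E \<and> invertible_mat F}"

text \<open>Closure in the (Euclidean) space of p x q pencils, written via sequences
  (the space is finite-dimensional, so closure = sequential closure).\<close>
definition pencil_closure :: "nat \<Rightarrow> nat \<Rightarrow> pencil set \<Rightarrow> pencil set" where
  "pencil_closure p q S = {Q. is_pencil p q Q \<and>
      (\<exists>X :: nat \<Rightarrow> pencil. (\<forall>k. X k \<in> S \<and> is_pencil p q (X k)) \<and>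
         (\<forall>i<p. \<forall>j<q. (\<lambda>k. fst (X k) $$ (i,j)) \<longlonglongrightarrow> fst Q $$ (i,j) \<and>
                       (\<lambda>k. snd (X k) $$ (i,j)) \<longlonglongrightarrow> snd Q $$ (i,j)))}"

definition L_block :: "nat \<Rightarrow> pencil" where
  "L_block k = (mat k (k+1) (\<lambda>(i,j). if j = i + 1 then 1 else 0),
                mat k (k+1) (\<lambda>(i,j). if j = i then 1 else 0))"

definition LT_block :: "nat \<Rightarrow> pencil" where
  "LT_block k = pencil_transpose (L_block k)"

definition bdiag_mat :: "complex mat \<Rightarrow> complex mat \<Rightarrow> complex mat" where
  "bdiag_mat A B = four_block_mat A (0\<^sub>m (dim_row A) (dim_col B)) (0\<^sub>m (dim_row B) (dim_col A)) B"

fun pencil_bdiag :: "pencil list \<Rightarrow> pencil" where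
  "pencil_bdiag [] = (0\<^sub>m 0 0, 0\<^sub>m 0 0)"
| "pencil_bdiag (P # Ps) =
     (bdiag_mat (fst P) (fst (pencil_bdiag Ps)), bdiag_mat (snd P) (snd (pencil_bdiag Ps)))"

definition K_pencil :: "nat \<Rightarrow> nat \<Rightarrow> nat \<Rightarrow> nat \<Rightarrow> pencil" where
  "K_pencil p q r b =
    (let \<alpha> = b div (q - r); s = b mod (q - r);
         \<beta> = (r - b) div (p - r); t = (r - b) mod (p - r)
     in pencil_bdiag (replicate s (L_block (\<alpha> + 1)) @ replicate (q - r - s) (L_block \<alpha>) @
                      replicate t (LT_block (\<beta> + 1)) @ replicate (p - r - t) (LT_block \<beta>)))"

end

theory Submission
  imports Defs "Jordan_Normal_Form.Determinant"
begin

text \<open>Transposition maps the strict equivalence orbit of a pencil K into that of its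
  transpose, and it commutes with taking closures because closure is entrywise convergence.
  The transpose of K_a^{m x n} is block diagonal with exactly the blocks of K_{r-a}^{n x m},
  only with the L-blocks and the transposed L-blocks in the opposite order; conjugating by
  block swap matrices reorders them.  Hence the transpose of the orbit of K_a^{m x n} lies in
  the orbit of K_{r-a}^{n x m}.\<close>

lemma invertible_mat_iff_det_nonzero:
  fixes A :: "'a :: field mat"
  assumes A: "A \<in> carrier_mat n n"
  shows "invertible_mat A \<longleftrightarrow> det A \<noteq> 0"
proof
  assume "invertible_mat A"
  then obtain B where AB: "A * B = 1\<^sub>m n" and BA: "B * A = 1\<^sub>m (dim_row B)"
    using A unfolding invertible_mat_def inverts_mat_def by auto
  have B: "B \<in> carrier_mat n n"
    using A AB BA by (metis carrier_matD carrier_matI index_mult_mat(2,3) index_one_mat(2,3))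
  have "det A * det B = 1"
    using det_mult[OF A B] AB by simp
  then show "det A \<noteq> 0" by auto
next
  assume "det A \<noteq> 0"
  from det_non_zero_imp_unit[OF A this, of "()"]
  obtain B where "B \<in> carrier_mat n n" "A * B = 1\<^sub>m n" "B * A = 1\<^sub>m n"
    unfolding Units_def ring_mat_def by auto
  then show "invertible_mat A"
    using A unfolding invertible_mat_def inverts_mat_def square_mat.simps by auto
qed

lemma invertible_mat_mult:
  fixes A B :: "'a :: field mat"
  assumes "A \<in> carrier_mat n n" "B \<in> carrier_mat n n" "invertible_mat A" "invertible_mat B"
  shows "invertible_mat (A * B)"
  using assms invertible_mat_iff_det_nonzero[of "A * B" n]
  by (simp add: invertible_mat_iff_det_nonzero det_mult)

lemma invertible_mat_transpose:
  fixes A :: "'a :: field mat"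
  assumes "A \<in> carrier_mat n n" "invertible_mat A"
  shows "invertible_mat (transpose_mat A)"
  using assms by (simp add: invertible_mat_iff_det_nonzero det_transpose)

definition swap_block_mat :: "nat \<Rightarrow> nat \<Rightarrow> 'a :: semiring_1 mat" where
  "swap_block_mat a b = four_block_mat (0\<^sub>m b a) (1\<^sub>m b) (1\<^sub>m a) (0\<^sub>m a b)"

lemma dim_swap_block_mat [simp]:
  "dim_row (swap_block_mat a b) = b + a" "dim_col (swap_block_mat a b) = a + b"
  unfolding swap_block_mat_def by simp_all

lemma swap_block_mat_mult_swap:
  "swap_block_mat b a * swap_block_mat a b = (1\<^sub>m (a + b) :: 'a :: semiring_1 mat)"
  unfolding swap_block_mat_def
  by (subst mult_four_block_mat[where ?n1.0 = b and ?n2.0 = a]) auto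

lemma invertible_swap_block_mat: "invertible_mat (swap_block_mat a b :: 'a :: semiring_1 mat)"
  using swap_block_mat_mult_swap[of a b] swap_block_mat_mult_swap[of b a]
  unfolding invertible_mat_def inverts_mat_def
  by (intro conjI exI[of _ "swap_block_mat b a"]) (auto simp: add.commute)

lemma swap_block_mat_bdiag_mat:
  assumes A: "A \<in> carrier_mat ra ca" and B: "B \<in> carrier_mat rb cb"
  shows "swap_block_mat ra rb * bdiag_mat A B * swap_block_mat cb ca = bdiag_mat B A"
proof -
  have "swap_block_mat ra rb * bdiag_mat A B = four_block_mat (0\<^sub>m rb ca) B A (0\<^sub>m ra cb)"
    unfolding swap_block_mat_def bdiag_mat_def using A B
    by (subst mult_four_block_mat[where ?n1.0 = ra and ?n2.0 = rb and ?nc1.0 = ca and ?nc2.0 = cb]) auto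
  also have "\<dots> * swap_block_mat cb ca = bdiag_mat B A"
    unfolding swap_block_mat_def bdiag_mat_def using A B
    by (subst mult_four_block_mat[where ?n1.0 = ca and ?n2.0 = cb and ?nc1.0 = cb and ?nc2.0 = ca]) auto
  finally show ?thesis .
qed

definition pencil_wf :: "pencil \<Rightarrow> bool" where
  "pencil_wf P \<longleftrightarrow> is_pencil (dim_row (fst P)) (dim_col (fst P)) P"

lemma pencil_wf_transpose: "pencil_wf P \<Longrightarrow> pencil_wf (pencil_transpose P)"
  by (auto simp: pencil_wf_def is_pencil_def pencil_transpose_def)

lemma transpose_mult_mult:
  fixes E A F :: "'a :: comm_semiring_0 mat"
  assumes "E \<in> carrier_mat p p" "A \<in> carrier_mat p q" "F \<in> carrier_mat q q"
  shows "transpose_mat (E * A * F) = transpose_mat F * transpose_mat A * transpose_mat E"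
  using assms by (simp add: transpose_mult[of _ p q _ q] transpose_mult[of _ p p _ q])

lemma mult_mult_sandwich:
  fixes E G A H F :: "'a :: semiring_0 mat"
  assumes E: "E \<in> carrier_mat p p" and G: "G \<in> carrier_mat p p" and A: "A \<in> carrier_mat p q"
    and H: "H \<in> carrier_mat q q" and F: "F \<in> carrier_mat q q"
  shows "E * (G * A * H) * F = (E * G) * A * (H * F)"
proof -
  have GA: "G * A \<in> carrier_mat p q" and HF: "H * F \<in> carrier_mat q q"
    using G A H F by auto
  have "E * (G * A * H) * F = E * (G * A * H * F)"
    using E mult_carrier_mat[OF GA H] F by (rule assoc_mult_mat)
  also have "G * A * H * F = G * A * (H * F)"
    using GA H F by (rule assoc_mult_mat)
  also have "E * (G * A * (H * F)) = E * (G * A) * (H * F)"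
    using E GA HF by (rule assoc_mult_mat[symmetric])
  also have "E * (G * A) = E * G * A"
    using E G A by (rule assoc_mult_mat[symmetric])
  finally show ?thesis .
qed

lemma transpose_mem_orbit:
  assumes "pencil_wf K" "X \<in> orbit K"
  shows "pencil_transpose X \<in> orbit (pencil_transpose K)"
proof -
  define p q where "p = dim_row (fst K)" and "q = dim_col (fst K)"
  obtain E F where X: "X = (E * fst K * F, E * snd K * F)"
    and E: "E \<in> carrier_mat p p" "invertible_mat E"
    and F: "F \<in> carrier_mat q q" "invertible_mat F"
    using assms(2) unfolding orbit_def p_def q_def by blast
  have K: "fst K \<in> carrier_mat p q" "snd K \<in> carrier_mat p q"
    using assms(1) unfolding pencil_wf_def is_pencil_def p_def q_def by auto
  show ?thesis
    unfolding orbit_def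
  proof (intro CollectI exI conjI)
    show "pencil_transpose X = (transpose_mat F * fst (pencil_transpose K) * transpose_mat E,
        transpose_mat F * snd (pencil_transpose K) * transpose_mat E)"
      unfolding X pencil_transpose_def
      using transpose_mult_mult[OF E(1) K(1) F(1)] transpose_mult_mult[OF E(1) K(2) F(1)] by simp
  qed (use E F in \<open>auto simp: pencil_transpose_def p_def q_def invertible_mat_transpose\<close>)
qed

lemma orbit_subset_orbit:
  assumes "pencil_wf P" "P' \<in> orbit P"
  shows "orbit P' \<subseteq> orbit P"
proof
  define p q where "p = dim_row (fst P)" and "q = dim_col (fst P)"
  obtain G H where P': "P' = (G * fst P * H, G * snd P * H)"
    and G: "G \<in> carrier_mat p p" "invertible_mat G"
    and H: "H \<in> carrier_mat q q" "invertible_mat H"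
    using assms(2) unfolding orbit_def p_def q_def by blast
  have P: "fst P \<in> carrier_mat p q" "snd P \<in> carrier_mat p q"
    using assms(1) unfolding pencil_wf_def is_pencil_def p_def q_def by auto
  fix X assume "X \<in> orbit P'"
  then obtain E F where X: "X = (E * fst P' * F, E * snd P' * F)"
    and E: "E \<in> carrier_mat p p" "invertible_mat E"
    and F: "F \<in> carrier_mat q q" "invertible_mat F"
    using G H P unfolding orbit_def P' by auto
  show "X \<in> orbit P"
    unfolding orbit_def
  proof (intro CollectI exI conjI)
    show "X = ((E * G) * fst P * (H * F), (E * G) * snd P * (H * F))"
      unfolding X P' fst_conv snd_conv
      using mult_mult_sandwich[OF E(1) G(1) P(1) H(1) F(1)] mult_mult_sandwich[OF E(1) G(1) P(2) H(1) F(1)]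
      by simp
  qed (use E F G H in \<open>auto simp: p_def q_def invertible_mat_mult\<close>)
qed

lemma pencil_bdiag_eq_diag_block_mat:
  "pencil_bdiag Ps = (diag_block_mat (map fst Ps), diag_block_mat (map snd Ps))"
  by (induct Ps) (auto simp: bdiag_mat_def Let_def)

lemma pencil_bdiag_append:
  "pencil_bdiag (Ps @ Qs) =
    (bdiag_mat (fst (pencil_bdiag Ps)) (fst (pencil_bdiag Qs)),
     bdiag_mat (snd (pencil_bdiag Ps)) (snd (pencil_bdiag Qs)))"
  by (simp add: pencil_bdiag_eq_diag_block_mat diag_block_mat_append bdiag_mat_def Let_def)

lemma pencil_wf_bdiag: "\<forall>P\<in>set Ps. pencil_wf P \<Longrightarrow> pencil_wf (pencil_bdiag Ps)"
  by (induct Ps) (auto simp: pencil_wf_def is_pencil_def bdiag_mat_def)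

lemma transpose_bdiag_mat: "transpose_mat (bdiag_mat A B) = bdiag_mat (transpose_mat A) (transpose_mat B)"
  by (rule eq_matI) (auto simp: bdiag_mat_def)

lemma pencil_transpose_bdiag:
  "pencil_transpose (pencil_bdiag Ps) = pencil_bdiag (map pencil_transpose Ps)"
  by (induct Ps) (auto simp: pencil_transpose_def transpose_bdiag_mat prod_eq_iff)

lemma pencil_bdiag_append_swap_mem_orbit:
  assumes "\<forall>P\<in>set (Ps @ Qs). pencil_wf P"
  shows "pencil_bdiag (Qs @ Ps) \<in> orbit (pencil_bdiag (Ps @ Qs))"
proof -
  define A1 B1 A2 B2 where "A1 = fst (pencil_bdiag Ps)" and "B1 = snd (pencil_bdiag Ps)"
    and "A2 = fst (pencil_bdiag Qs)" and "B2 = snd (pencil_bdiag Qs)"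
  define ra ca rb cb where "ra = dim_row A1" and "ca = dim_col A1"
    and "rb = dim_row A2" and "cb = dim_col A2"
  have wf: "pencil_wf (pencil_bdiag Ps)" "pencil_wf (pencil_bdiag Qs)"
    using assms by (auto intro: pencil_wf_bdiag)
  have carrier: "A1 \<in> carrier_mat ra ca" "B1 \<in> carrier_mat ra ca"
    "A2 \<in> carrier_mat rb cb" "B2 \<in> carrier_mat rb cb"
    using wf unfolding pencil_wf_def is_pencil_def A1_def B1_def A2_def B2_def ra_def ca_def rb_def cb_def
    by auto
  have PQ: "pencil_bdiag (Ps @ Qs) = (bdiag_mat A1 A2, bdiag_mat B1 B2)"
    and QP: "pencil_bdiag (Qs @ Ps) = (bdiag_mat A2 A1, bdiag_mat B2 B1)"
    by (simp_all add: pencil_bdiag_append A1_def B1_def A2_def B2_def)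
  show ?thesis
    unfolding PQ QP orbit_def fst_conv snd_conv
  proof (intro CollectI exI conjI)
    show "(bdiag_mat A2 A1, bdiag_mat B2 B1) =
        (swap_block_mat ra rb * bdiag_mat A1 A2 * swap_block_mat cb ca,
         swap_block_mat ra rb * bdiag_mat B1 B2 * swap_block_mat cb ca)"
      using swap_block_mat_bdiag_mat[OF carrier(1,3)] swap_block_mat_bdiag_mat[OF carrier(2,4)]
      by simp
  qed (use carrier in \<open>auto simp: bdiag_mat_def add.commute invertible_swap_block_mat\<close>)
qed

lemma pencil_wf_L_block: "pencil_wf (L_block k)"
  by (simp add: pencil_wf_def is_pencil_def L_block_def)

lemma pencil_wf_LT_block: "pencil_wf (LT_block k)"
  by (simp add: LT_block_def pencil_wf_transpose pencil_wf_L_block)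

lemma pencil_transpose_transpose [simp]: "pencil_transpose (pencil_transpose P) = P"
  by (simp add: pencil_transpose_def)

lemma pencil_wf_K_pencil: "pencil_wf (K_pencil p q r b)"
  unfolding K_pencil_def Let_def
  by (rule pencil_wf_bdiag) (auto simp: pencil_wf_L_block pencil_wf_LT_block)

lemma transpose_K_pencil_mem_orbit:
  assumes "b \<le> r"
  shows "pencil_transpose (K_pencil p q r b) \<in> orbit (K_pencil q p r (r - b))"
proof -
  define Ls where "Ls = replicate (b mod (q - r)) (L_block (b div (q - r) + 1))
    @ replicate (q - r - b mod (q - r)) (L_block (b div (q - r)))"
  define LTs where "LTs = replicate ((r - b) mod (p - r)) (LT_block ((r - b) div (p - r) + 1))
    @ replicate (p - r - (r - b) mod (p - r)) (LT_block ((r - b) div (p - r)))"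
  have "pencil_transpose (K_pencil p q r b) = pencil_bdiag (map pencil_transpose Ls @ map pencil_transpose LTs)"
    unfolding K_pencil_def Let_def Ls_def LTs_def by (simp add: pencil_transpose_bdiag)
  moreover have "K_pencil q p r (r - b) = pencil_bdiag (map pencil_transpose LTs @ map pencil_transpose Ls)"
    unfolding K_pencil_def Let_def Ls_def LTs_def using assms by (simp add: LT_block_def)
  moreover have "\<forall>P\<in>set (map pencil_transpose LTs @ map pencil_transpose Ls). pencil_wf P"
    unfolding Ls_def LTs_def
    by (auto intro!: pencil_wf_transpose pencil_wf_L_block pencil_wf_LT_block)
  ultimately show ?thesis
    by (simp add: pencil_bdiag_append_swap_mem_orbit)
qed

lemma pencil_closure_mono: "S \<subseteq> T \<Longrightarrow> pencil_closure p q S \<subseteq> pencil_closure p q T"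
  unfolding pencil_closure_def by blast

lemma transpose_mem_pencil_closure:
  assumes "Q \<in> pencil_closure p q S"
  shows "pencil_transpose Q \<in> pencil_closure q p (pencil_transpose ` S)"
proof -
  obtain X where X: "\<forall>k. X k \<in> S \<and> is_pencil p q (X k)"
    and lim: "\<forall>i<p. \<forall>j<q. (\<lambda>k. fst (X k) $$ (i,j)) \<longlonglongrightarrow> fst Q $$ (i,j) \<and>
                         (\<lambda>k. snd (X k) $$ (i,j)) \<longlonglongrightarrow> snd Q $$ (i,j)"
    and Q: "is_pencil p q Q"
    using assms unfolding pencil_closure_def by blast
  have transpose_index: "fst (pencil_transpose P) $$ (j,i) = fst P $$ (i,j)"
      "snd (pencil_transpose P) $$ (j,i) = snd P $$ (i,j)"
    if "is_pencil p q P" "i < p" "j < q" for P i j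
    using that by (auto simp: is_pencil_def pencil_transpose_def)
  have transpose_is_pencil: "is_pencil q p (pencil_transpose P)" if "is_pencil p q P" for P
    using that by (auto simp: is_pencil_def pencil_transpose_def)
  show ?thesis
    unfolding pencil_closure_def
  proof (intro CollectI conjI exI[of _ "\<lambda>k. pencil_transpose (X k)"] allI impI)
    fix k
    show "pencil_transpose (X k) \<in> pencil_transpose ` S" "is_pencil q p (pencil_transpose (X k))"
      using X transpose_is_pencil by auto
  next
    fix j i assume "j < q" "i < p"
    then show "(\<lambda>k. fst (pencil_transpose (X k)) $$ (j, i)) \<longlonglongrightarrow> fst (pencil_transpose Q) $$ (j, i)"
      "(\<lambda>k. snd (pencil_transpose (X k)) $$ (j, i)) \<longlonglongrightarrow> snd (pencil_transpose Q) $$ (j, i)"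
      using lim X Q by (simp_all add: transpose_index)
  qed (use Q transpose_is_pencil in blast)
qed

theorem lemma3p8:
  fixes m n r a :: nat and Q :: pencil
  assumes "0 < m" and "0 < n"
    and "1 \<le> r"
    and "m \<noteq> n \<Longrightarrow> r \<le> min m n"
    and "m = n \<Longrightarrow> r \<le> n - 1"
    and "a \<le> r"
    and "is_pencil m n Q"
    and "normal_rank Q \<le> r"
    and "Q \<in> pencil_closure m n (orbit (K_pencil m n r a))"
  shows "pencil_transpose Q \<in> pencil_closure n m (orbit (K_pencil n m r (r - a)))"
proof -
  have "pencil_transpose ` orbit (K_pencil m n r a) \<subseteq> orbit (pencil_transpose (K_pencil m n r a))"
    using transpose_mem_orbit[OF pencil_wf_K_pencil] by blast
  also have "\<dots> \<subseteq> orbit (K_pencil n m r (r - a))"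
    using orbit_subset_orbit[OF pencil_wf_K_pencil transpose_K_pencil_mem_orbit[OF \<open>a \<le> r\<close>]] .
  finally show ?thesis
    using transpose_mem_pencil_closure[OF assms(9)] pencil_closure_mono by blast
qed

end
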